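(* Let $\{P^{[n]}\in\mathbb{R}^{n\times n}\}_{n\in\mathbb{N}}$ be a sequence of primitive stochastic matrices of increasing dimensions. If $$\lim_{n\to\infty}\ \sup_{k\in\mathbb{N}}\Big\|\tfrac{1}{n}(P^{[n]})^k\Big\|_1\,\tau_{\mathrm{mix}}(P^{[n]})=0,$$ then the sequence is uniformly wise, i.e. $\sup_{k\in\mathbb{N}}|\mathrm{ave}(x^{[n]}(k))-\mu|\to 0$ in probability as $n\to\infty$.
   Context: A matrix $P\in\mathbb{R}^{n\times n}$ is stochastic if $P\ge0$ and $P\mathbf{1}_n=\mathbf{1}_n$; primitive if its associated directed graph (edge $(i,j)$ iff $P_{ij}>0$) is strongly connected and aperiodic. $\|P\|_1=\max_j\sum_i P_{ij}$ (maximum column sum). The mixing time of a primitive stochastic $P$ is $\tau_{\mathrm{mix}}(P)=\inf\{t\in\mathbb{N}:\max_{i,j}\sum_{k}|(P^t)_{ik}-(P^t)_{jk}|\le 1/e\}$. For $x\in\mathbb{R}^n$, $\mathrm{ave}(x)=\frac1n\sum_i x_i$. Setting: for each $n$, $x^{[n]}_i(0)=\mu+\xi^{[n]}_i(0)$ with $\mu\in\mathbb{R}$ fixed and $\xi^{[n]}_1(0),\dots,\xi^{[n]}_n(0)$ independent Gaussian with mean $0$ and common finite variance $\sigma^2$; and $x^{[n]}(k+1)=P^{[n]}x^{[n]}(k)$ for $k\ge0$. *)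

theory Defs
  imports "HOL-Probability.Probability"
begin

text \<open>n x n real matrices are represented as functions nat => nat => real,
  with indices ranging over {..<n} (0-based).\<close>

definition stochastic :: "nat \<Rightarrow> (nat \<Rightarrow> nat \<Rightarrow> real) \<Rightarrow> bool" where
  "stochastic n A \<longleftrightarrow> (\<forall>i<n. \<forall>j<n. 0 \<le> A i j) \<and> (\<forall>i<n. (\<Sum>j<n. A i j) = 1)"

definition walk :: "nat \<Rightarrow> (nat \<Rightarrow> nat \<Rightarrow> real) \<Rightarrow> nat \<Rightarrow> nat \<Rightarrow> nat \<Rightarrow> bool" where
  "walk n A i j k \<longleftrightarrow> (\<exists>v :: nat \<Rightarrow> nat. v 0 = i \<and> v k = j \<and>
      (\<forall>t\<le>k. v t < n) \<and> (\<forall>t<k. 0 < A (v t) (v (Suc t))))"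

definition strongly_connected :: "nat \<Rightarrow> (nat \<Rightarrow> nat \<Rightarrow> real) \<Rightarrow> bool" where
  "strongly_connected n A \<longleftrightarrow> (\<forall>i<n. \<forall>j<n. \<exists>k. walk n A i j k)"

definition aperiodic :: "nat \<Rightarrow> (nat \<Rightarrow> nat \<Rightarrow> real) \<Rightarrow> bool" where
  "aperiodic n A \<longleftrightarrow> Gcd {k. 0 < k \<and> (\<exists>i<n. walk n A i i k)} = 1"

definition primitive :: "nat \<Rightarrow> (nat \<Rightarrow> nat \<Rightarrow> real) \<Rightarrow> bool" where
  "primitive n A \<longleftrightarrow> strongly_connected n A \<and> aperiodic n A"

fun matpow :: "nat \<Rightarrow> (nat \<Rightarrow> nat \<Rightarrow> real) \<Rightarrow> nat \<Rightarrow> nat \<Rightarrow> nat \<Rightarrow> real" where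
  "matpow n A 0 = (\<lambda>i j. if i = j then 1 else 0)"
| "matpow n A (Suc k) = (\<lambda>i j. \<Sum>l<n. matpow n A k i l * A l j)"

definition norm1 :: "nat \<Rightarrow> (nat \<Rightarrow> nat \<Rightarrow> real) \<Rightarrow> real" where
  "norm1 n A = Max ((\<lambda>j. \<Sum>i<n. \<bar>A i j\<bar>) ` {..<n})"

definition tau_mix :: "nat \<Rightarrow> (nat \<Rightarrow> nat \<Rightarrow> real) \<Rightarrow> nat" where
  "tau_mix n A = Inf {t. \<forall>i<n. \<forall>j<n.
      (\<Sum>k<n. \<bar>matpow n A t i k - matpow n A t j k\<bar>) \<le> 1 / exp 1}"

definition ave :: "nat \<Rightarrow> (nat \<Rightarrow> real) \<Rightarrow> real" where
  "ave n x = (\<Sum>i<n. x i) / real n"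

definition state :: "nat \<Rightarrow> (nat \<Rightarrow> nat \<Rightarrow> real) \<Rightarrow> real \<Rightarrow> (nat \<Rightarrow> real) \<Rightarrow> nat \<Rightarrow> nat \<Rightarrow> real" where
  "state n A \<mu> \<xi>0 k i = (\<Sum>j<n. matpow n A k i j * (\<mu> + \<xi>0 j))"

end

(* Write ave(x(k)) - mu = sum_j c_k(j) xi_j, where c_k = (1/n) 1^T P^k is a probability vector with
   entries at most s = sup_k ||P^k / n||_1.  Split k = r + m tau with r < tau = tau_mix and telescope
   c_k = c_r + sum_{l<m} (c_{r+(l+1)tau} - c_{r+l tau}).  Any two rows of P^tau are within 1/e in l1, so
   by Dobrushin's contraction the l-th increment has l1 norm at most 2 (1/4)^l, hence the corresponding
   linear combination of the noise has variance at most 2 s sigma^2 (1/4)^l.  Chebyshev's inequality with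
   thresholds eps/2 and eps (3/4)^l / 8, summed over r < tau and l, bounds the probability that
   sup_k |ave(x(k)) - mu| > eps by a constant times sigma^2 tau s / eps^2, which tends to 0. *)

theory Submission
  imports Defs
begin

section \<open>Powers of stochastic matrices\<close>

lemma stochastic_nonneg: "stochastic n A \<Longrightarrow> i < n \<Longrightarrow> j < n \<Longrightarrow> 0 \<le> A i j"
  unfolding stochastic_def by auto

lemma stochastic_row_sum: "stochastic n A \<Longrightarrow> i < n \<Longrightarrow> (\<Sum>j<n. A i j) = 1"
  unfolding stochastic_def by auto

lemma matpow_add:
  assumes "j < n"
  shows "matpow n A (a + b) i j = (\<Sum>l<n. matpow n A a i l * matpow n A b l j)"
  using assms
proof (induction b arbitrary: j)
  case 0
  then show ?case by (simp add: if_distrib[of "\<lambda>x. _ * x"] sum.delta' cong: if_cong)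
next
  case (Suc b)
  have "matpow n A (a + Suc b) i j = (\<Sum>l<n. (\<Sum>m<n. matpow n A a i m * matpow n A b m l) * A l j)"
    using Suc.IH by simp
  also have "\<dots> = (\<Sum>m<n. matpow n A a i m * (\<Sum>l<n. matpow n A b m l * A l j))"
    by (simp add: sum_distrib_left sum_distrib_right mult.assoc) (rule sum.swap)
  finally show ?case by simp
qed

lemma matpow_nonneg:
  assumes "stochastic n A" "i < n" "j < n"
  shows "0 \<le> matpow n A k i j"
  using assms(3)
proof (induction k arbitrary: j)
  case (Suc k)
  then show ?case by (auto intro!: sum_nonneg mult_nonneg_nonneg stochastic_nonneg[OF assms(1)])
qed simp

lemma matpow_row_sum:
  assumes "stochastic n A" "i < n"
  shows "(\<Sum>j<n. matpow n A k i j) = 1"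
proof (induction k)
  case 0
  then show ?case using assms(2) by (simp add: sum.delta)
next
  case (Suc k)
  have "(\<Sum>j<n. matpow n A (Suc k) i j) = (\<Sum>l<n. matpow n A k i l * (\<Sum>j<n. A l j))"
    by (simp add: sum_distrib_left) (rule sum.swap)
  also have "\<dots> = (\<Sum>l<n. matpow n A k i l)"
    by (simp add: stochastic_row_sum[OF assms(1)])
  finally show ?case using Suc by simp
qed

lemma walk_imp_matpow_pos:
  assumes st: "stochastic n A" and "walk n A i j k"
  shows "0 < matpow n A k i j"
proof -
  obtain v where v: "v 0 = i" "v k = j" "\<forall>t\<le>k. v t < n" "\<forall>t<k. 0 < A (v t) (v (Suc t))"
    using assms(2) unfolding walk_def by blast
  have "0 < matpow n A m (v 0) (v m)" if "m \<le> k" for m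
    using that
  proof (induction m)
    case (Suc m)
    have "0 < matpow n A m (v 0) (v m) * A (v m) (v (Suc m))"
      using Suc v by auto
    also have "\<dots> \<le> (\<Sum>l<n. matpow n A m (v 0) l * A l (v (Suc m)))"
      by (rule member_le_sum[where f = "\<lambda>l. matpow n A m (v 0) l * A l (v (Suc m))"])
         (use Suc.prems v matpow_nonneg[OF st] stochastic_nonneg[OF st] in auto)
    finally show ?case by simp
  qed simp
  then show ?thesis using v by blast
qed

lemma walk_append:
  assumes "walk n A i j a" "walk n A j l b"
  shows "walk n A i l (a + b)"
proof -
  obtain v where v: "v 0 = i" "v a = j" "\<forall>t\<le>a. v t < n" "\<forall>t<a. 0 < A (v t) (v (Suc t))"
    using assms(1) unfolding walk_def by blast
  obtain w where w: "w 0 = j" "w b = l" "\<forall>t\<le>b. w t < n" "\<forall>t<b. 0 < A (w t) (w (Suc t))"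
    using assms(2) unfolding walk_def by blast
  define u where "u t = (if t \<le> a then v t else w (t - a))" for t
  have "0 < A (u t) (u (Suc t))" if t: "t < a + b" for t
  proof (cases "t < a")
    case False
    then have "Suc t - a = Suc (t - a)" "t - a < b" using t by auto
    then show ?thesis using False v w by (cases "t = a") (auto simp: u_def)
  qed (use v in \<open>auto simp: u_def\<close>)
  moreover have "u 0 = i" "u (a + b) = l" "\<forall>t\<le>a+b. u t < n"
    using v w by (auto simp: u_def)
  ultimately show ?thesis unfolding walk_def by blast
qed

section \<open>Primitive matrices have a positive power\<close>

lemma add_closed_multiple_mem:
  fixes S :: "nat set"
  assumes add: "\<And>x y. x \<in> S \<Longrightarrow> y \<in> S \<Longrightarrow> x + y \<in> S" and "y \<in> S" "x \<in> S"
  shows "y + k * x \<in> S"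
proof (induction k)
  case (Suc k)
  then show ?case using add[OF \<open>x \<in> S\<close> Suc] by (metis add.left_commute mult_Suc)
qed (simp add: \<open>y \<in> S\<close>)

lemma add_closed_Gcd_1_consecutive:
  fixes S :: "nat set"
  assumes add: "\<And>x y. x \<in> S \<Longrightarrow> y \<in> S \<Longrightarrow> x + y \<in> S" and Gcd: "Gcd S = 1"
  shows "\<exists>b>0. b \<in> S \<and> b + 1 \<in> S"
proof -
  have mult: "\<And>y x k. y \<in> S \<Longrightarrow> x \<in> S \<Longrightarrow> y + k * x \<in> S"
    using add add_closed_multiple_mem[of S] by blast
  obtain s where s: "s \<in> S" "s \<noteq> 0"
    using Gcd Gcd_0_iff[of S] by auto
  define D where "D = {d. 0 < d \<and> (\<exists>b\<in>S. b + d \<in> S)}"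
  have "s \<in> D" using s add unfolding D_def by force
  define d where "d = (LEAST d. d \<in> D)"
  have "d \<in> D" unfolding d_def by (rule LeastI) fact
  then obtain b where b: "b \<in> S" "b + d \<in> S" "0 < d" unfolding D_def by blast
  have "d dvd x" if x: "x \<in> S" for x
  proof (rule ccontr)
    define q r where "q = x div d" and "r = x mod d"
    assume "\<not> d dvd x"
    then have r: "0 < r" "r < d" using b(3) unfolding r_def by (auto simp: dvd_eq_mod_eq_0)
    have x_eq: "x = q * d + r" unfolding q_def r_def by simp
    \<comment> \<open>r would be a positive difference of two elements of S smaller than d\<close>
    have "b + q * (b + d) \<in> S" by (rule mult[OF b(1,2)])
    moreover have "(x + b) + q * b \<in> S" by (rule mult[OF add[OF x b(1)] b(1)])
    moreover have "b + q * (b + d) + r = (x + b) + q * b"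
      unfolding x_eq by (simp add: algebra_simps)
    ultimately have "r \<in> D" using r unfolding D_def by (metis (mono_tags, lifting) mem_Collect_eq)
    then have "d \<le> r" unfolding d_def by (rule Least_le)
    with r show False by simp
  qed
  then have d1: "d = 1" using Gcd Gcd_greatest[of S d] by simp
  show ?thesis
  proof (cases "b = 0")
    case True
    then have one: "1 \<in> S" using b d1 by simp
    have two: "2 \<in> S" using add[OF one one] by (simp add: numeral_2_eq_2)
    have "2 + 1 \<in> S" by (rule add[OF two one])
    then show ?thesis using two by (intro exI[of _ 2]) simp
  qed (use b d1 in auto)
qed

lemma add_closed_consecutive_imp_large_mem:
  fixes S :: "nat set"
  assumes add: "\<And>x y. x \<in> S \<Longrightarrow> y \<in> S \<Longrightarrow> x + y \<in> S"
    and b: "0 < b" "b \<in> S" "b + 1 \<in> S" and m: "b * b \<le> m"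
  shows "m \<in> S"
proof -
  have mult: "\<And>y x k. y \<in> S \<Longrightarrow> x \<in> S \<Longrightarrow> y + k * x \<in> S"
    using add add_closed_multiple_mem[of S] by blast
  define q r where "q = m div b" and "r = m mod b"
  have r: "r < b" using b unfolding r_def by simp
  have m_eq: "m = q * b + r" unfolding q_def r_def by simp
  have "b \<le> q"
  proof (rule ccontr)
    assume "\<not> b \<le> q"
    then have "b * (q + 1) \<le> b * b" by (intro mult_le_mono2) simp
    with m r show False unfolding m_eq by (simp add: algebra_simps)
  qed
  define t where "t = q - r - 1"
  have t: "q = r + 1 + t" using r \<open>b \<le> q\<close> unfolding t_def by simp
  \<comment> \<open>m = q b + r = (q - r) b + r (b + 1), and q - r \<ge> 1\<close>
  have "m = (b + t * b) + r * (b + 1)"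
    unfolding m_eq t by (simp add: algebra_simps)
  also have "\<dots> \<in> S"
  proof (cases "r = 0")
    case False
    then obtain r' where r': "r = Suc r'" using not0_implies_Suc by blast
    have "b + t * b \<in> S" "(b + 1) + r' * (b + 1) \<in> S"
      by (rule mult[OF b(2) b(2)], rule mult[OF b(3) b(3)])
    moreover have "(b + t * b) + r * (b + 1) = (b + t * b) + ((b + 1) + r' * (b + 1))"
      unfolding r' by simp
    ultimately show ?thesis using add by metis
  qed (use mult[OF b(2) b(2)] in simp)
  finally show ?thesis .
qed

lemma add_closed_Gcd_1_eventually_mem:
  fixes S :: "nat set"
  assumes add: "\<And>x y. x \<in> S \<Longrightarrow> y \<in> S \<Longrightarrow> x + y \<in> S" and "Gcd S = 1"
  shows "eventually (\<lambda>m. m \<in> S) sequentially"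
proof -
  obtain b where "0 < b" "b \<in> S" "b + 1 \<in> S"
    using add_closed_Gcd_1_consecutive[OF add \<open>Gcd S = 1\<close>] by blast
  then show ?thesis
    using add_closed_consecutive_imp_large_mem[OF add] by (auto intro: eventually_sequentiallyI)
qed

lemma primitive_eventually_closed_walk:
  assumes pr: "primitive n A" and i: "i < n"
  shows "eventually (\<lambda>m. walk n A i i m) sequentially"
proof -
  have sc: "strongly_connected n A" and ap: "aperiodic n A"
    using pr unfolding primitive_def by auto
  define S where "S = {k. 0 < k \<and> walk n A i i k}"
  define U where "U = {k. 0 < k \<and> (\<exists>j<n. walk n A j j k)}"
  \<comment> \<open>a closed walk at j of length u, conjugated by walks i \<rightarrow> j \<rightarrow> i, shows Gcd S dvd u\<close>
  have "Gcd S dvd u" if u: "u \<in> U" for u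
  proof -
    obtain j where j: "j < n" "walk n A j j u" "0 < u" using u unfolding U_def by auto
    obtain a b where a: "walk n A i j a" and b: "walk n A j i b"
      using sc i j unfolding strongly_connected_def by blast
    have "walk n A i i (a + u + b)" by (rule walk_append[OF walk_append[OF a j(2)] b])
    then have "a + u + b \<in> S" using j(3) unfolding S_def by simp
    then have "Gcd S dvd (a + b) + u" using Gcd_dvd by (metis add.commute add.left_commute)
    moreover have "Gcd S dvd a + b"
    proof (cases "a + b = 0")
      case False
      then show ?thesis using walk_append[OF a b] unfolding S_def by (simp add: Gcd_dvd)
    qed simp
    ultimately show ?thesis by (simp add: dvd_add_right_iff)
  qed
  then have "Gcd S dvd Gcd U" by (intro Gcd_greatest) auto
  moreover have "Gcd U = 1" using ap unfolding aperiodic_def U_def by simp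
  ultimately have "Gcd S = 1" by simp
  moreover have "x + y \<in> S" if "x \<in> S" "y \<in> S" for x y
    using that walk_append unfolding S_def by auto
  ultimately show ?thesis
    using add_closed_Gcd_1_eventually_mem[of S] unfolding S_def by (auto elim: eventually_mono)
qed

lemma primitive_matpow_pos:
  assumes st: "stochastic n A" and pr: "primitive n A"
  shows "\<exists>T. \<forall>i<n. \<forall>j<n. 0 < matpow n A T i j"
proof -
  have "eventually (\<lambda>m. walk n A i j m) sequentially" if ij: "i < n" "j < n" for i j
  proof -
    obtain l where l: "walk n A i j l"
      using pr ij unfolding primitive_def strongly_connected_def by blast
    obtain N where N: "\<forall>m\<ge>N. walk n A i i m"
      using primitive_eventually_closed_walk[OF pr ij(1)] by (auto simp: eventually_sequentially)
    have "walk n A i j m" if "N + l \<le> m" for m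
      using walk_append[of n A i i "m - l", OF _ l] N that by simp
    then show ?thesis by (auto simp: eventually_sequentially)
  qed
  then have "eventually (\<lambda>m. \<forall>i\<in>{..<n}. \<forall>j\<in>{..<n}. walk n A i j m) sequentially"
    by (intro eventually_ball_finite ballI) auto
  then obtain T where "\<forall>m\<ge>T. \<forall>i\<in>{..<n}. \<forall>j\<in>{..<n}. walk n A i j m"
    unfolding eventually_sequentially by blast
  then show ?thesis using walk_imp_matpow_pos[OF st] by blast
qed

section \<open>Contraction and the mixing time\<close>

lemma prob_vectors_dist_le_2:
  fixes p q :: "nat \<Rightarrow> real"
  assumes "\<And>k. k < n \<Longrightarrow> 0 \<le> p k" "\<And>k. k < n \<Longrightarrow> 0 \<le> q k"
    and "(\<Sum>k<n. p k) = 1" "(\<Sum>k<n. q k) = 1"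
  shows "(\<Sum>k<n. \<bar>p k - q k\<bar>) \<le> 2"
proof -
  have "\<bar>p k - q k\<bar> \<le> p k + q k" if "k < n" for k
    using assms(1,2)[OF that] by auto
  then have "(\<Sum>k<n. \<bar>p k - q k\<bar>) \<le> (\<Sum>k<n. p k + q k)"
    by (intro sum_mono) auto
  then show ?thesis using assms by (simp add: sum.distrib)
qed

lemma prob_vectors_dist_lt_2:
  fixes p q :: "nat \<Rightarrow> real"
  assumes "\<And>k. k < n \<Longrightarrow> 0 \<le> p k" "\<And>k. k < n \<Longrightarrow> 0 \<le> q k"
    and "(\<Sum>k<n. p k) = 1" "(\<Sum>k<n. q k) = 1"
    and "k0 < n" "0 < p k0" "0 < q k0"
  shows "(\<Sum>k<n. \<bar>p k - q k\<bar>) < 2"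
proof -
  have "\<bar>p k - q k\<bar> = p k + q k - 2 * min (p k) (q k)" for k
    by (simp add: min_def abs_if)
  then have "(\<Sum>k<n. \<bar>p k - q k\<bar>) = 2 - 2 * (\<Sum>k<n. min (p k) (q k))"
    using assms(3,4) by (simp add: sum_subtractf sum.distrib sum_distrib_left)
  moreover have "0 < (\<Sum>k<n. min (p k) (q k))"
  proof -
    have "0 < min (p k0) (q k0)" using assms(6,7) by simp
    also have "\<dots> \<le> (\<Sum>k<n. min (p k) (q k))"
      by (rule member_le_sum[where f = "\<lambda>k. min (p k) (q k)"]) (use assms in auto)
    finally show ?thesis .
  qed
  ultimately show ?thesis by simp
qed

lemma equal_mass_difference_contraction:
  fixes p q :: "nat \<Rightarrow> real" and Q :: "nat \<Rightarrow> nat \<Rightarrow> real"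
  assumes p: "\<And>i. 0 \<le> p i" and q: "\<And>i. 0 \<le> q i" and mass: "(\<Sum>i<n. q i) = (\<Sum>i<n. p i)"
    and QD: "\<And>i j. i < n \<Longrightarrow> j < n \<Longrightarrow> (\<Sum>k<n. \<bar>Q i k - Q j k\<bar>) \<le> D"
  shows "(\<Sum>i<n. p i) * (\<Sum>k<n. \<bar>\<Sum>i<n. (p i - q i) * Q i k\<bar>) \<le> (\<Sum>i<n. p i) * ((\<Sum>i<n. p i) * D)"
proof -
  define h where "h = (\<Sum>i<n. p i)"
  have h0: "0 \<le> h" unfolding h_def by (simp add: sum_nonneg p)
  \<comment> \<open>as p and q have the same mass h, h (p - q)^T Q is a mixture of differences of rows of Q\<close>
  have mixture: "h * (\<Sum>i<n. (p i - q i) * Q i k) = (\<Sum>i<n. \<Sum>j<n. p i * q j * (Q i k - Q j k))" for k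
  proof -
    have "(\<Sum>i<n. \<Sum>j<n. p i * q j * (Q i k - Q j k))
        = (\<Sum>i<n. \<Sum>j<n. p i * q j * Q i k) - (\<Sum>i<n. \<Sum>j<n. p i * q j * Q j k)"
      by (simp add: right_diff_distrib sum_subtractf)
    also have "(\<Sum>i<n. \<Sum>j<n. p i * q j * Q i k) = h * (\<Sum>i<n. p i * Q i k)"
      by (simp add: h_def mass[symmetric] sum_distrib_left sum_distrib_right mult_ac)
    also have "(\<Sum>i<n. \<Sum>j<n. p i * q j * Q j k) = h * (\<Sum>j<n. q j * Q j k)"
      by (simp add: h_def sum_distrib_left sum_distrib_right mult_ac) (rule sum.swap)
    finally show ?thesis
      by (simp add: left_diff_distrib sum_subtractf right_diff_distrib)
  qed
  have "h * (\<Sum>k<n. \<bar>\<Sum>i<n. (p i - q i) * Q i k\<bar>)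
      = (\<Sum>k<n. \<bar>\<Sum>i<n. \<Sum>j<n. p i * q j * (Q i k - Q j k)\<bar>)"
    by (subst sum_distrib_left) (rule sum.cong, simp, simp add: abs_mult h0 flip: mixture)
  also have "\<dots> \<le> (\<Sum>k<n. \<Sum>i<n. \<Sum>j<n. p i * q j * \<bar>Q i k - Q j k\<bar>)"
    by (intro sum_mono order_trans[OF sum_abs]) (simp add: abs_mult p q)
  also have "\<dots> = (\<Sum>i<n. \<Sum>j<n. p i * q j * (\<Sum>k<n. \<bar>Q i k - Q j k\<bar>))"
    by (subst sum.swap, rule sum.cong[OF refl], subst sum.swap, simp add: sum_distrib_left)
  also have "\<dots> \<le> (\<Sum>i<n. \<Sum>j<n. p i * q j * D)"
    by (intro sum_mono mult_left_mono QD) (auto simp: p q)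
  also have "\<dots> = (\<Sum>i<n. p i) * (\<Sum>j<n. q j) * D"
    by (simp add: sum_distrib_right sum_distrib_left mult_ac) (rule sum.swap)
  finally show ?thesis using mass unfolding h_def by simp
qed

lemma dobrushin_contraction:
  fixes d :: "nat \<Rightarrow> real" and Q :: "nat \<Rightarrow> nat \<Rightarrow> real"
  assumes d0: "(\<Sum>i<n. d i) = 0"
    and QD: "\<And>i j. i < n \<Longrightarrow> j < n \<Longrightarrow> (\<Sum>k<n. \<bar>Q i k - Q j k\<bar>) \<le> D"
  shows "(\<Sum>k<n. \<bar>\<Sum>i<n. d i * Q i k\<bar>) \<le> D / 2 * (\<Sum>i<n. \<bar>d i\<bar>)"
proof -
  define p where "p i = max (d i) 0" for i
  define q where "q i = max (- d i) 0" for i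
  have pq: "d i = p i - q i" "\<bar>d i\<bar> = p i + q i" "0 \<le> p i" "0 \<le> q i" for i
    unfolding p_def q_def by auto
  define h where "h = (\<Sum>i<n. p i)"
  have mass: "(\<Sum>i<n. q i) = h"
    using d0 unfolding h_def pq(1) by (simp add: sum_subtractf)
  have h0: "0 \<le> h" unfolding h_def by (simp add: sum_nonneg pq)
  show ?thesis
  proof (cases "h = 0")
    case True
    then have "d i = 0" if "i < n" for i
      using mass sum_nonneg_eq_0_iff[of "{..<n}" p] sum_nonneg_eq_0_iff[of "{..<n}" q] pq that
      unfolding h_def by auto
    then show ?thesis by simp
  next
    case False
    have "h * (\<Sum>k<n. \<bar>\<Sum>i<n. d i * Q i k\<bar>) \<le> h * (h * D)"
      using equal_mass_difference_contraction[OF pq(3,4) _ QD] mass unfolding h_def pq(1) by simp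
    then have "(\<Sum>k<n. \<bar>\<Sum>i<n. d i * Q i k\<bar>) \<le> h * D"
      using False h0 by (simp add: mult_le_cancel_left)
    then show ?thesis unfolding pq(2) sum.distrib mass h_def by (simp add: mult.commute)
  qed
qed

lemma matpow_dist_le_2:
  assumes st: "stochastic n A" and "i < n" "j < n"
  shows "(\<Sum>k<n. \<bar>matpow n A t i k - matpow n A t j k\<bar>) \<le> 2"
  using assms by (intro prob_vectors_dist_le_2) (auto intro: matpow_nonneg matpow_row_sum)

lemma matpow_mult_dist_le:
  assumes st: "stochastic n A" and D0: "0 \<le> D"
    and QD: "\<And>i j. i < n \<Longrightarrow> j < n \<Longrightarrow> (\<Sum>k<n. \<bar>matpow n A T i k - matpow n A T j k\<bar>) \<le> D"
    and ij: "i < n" "j < n"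
  shows "(\<Sum>k<n. \<bar>matpow n A (T * m) i k - matpow n A (T * m) j k\<bar>) \<le> 2 * (D / 2) ^ m"
proof (induction m)
  case 0
  then show ?case using matpow_dist_le_2[OF st ij, of 0] by simp
next
  case (Suc m)
  define d where "d l = matpow n A (T * m) i l - matpow n A (T * m) j l" for l
  have "matpow n A (T * m + T) i k - matpow n A (T * m + T) j k = (\<Sum>l<n. d l * matpow n A T l k)"
    if "k < n" for k
    unfolding d_def matpow_add[OF that] by (simp add: left_diff_distrib sum_subtractf)
  then have "(\<Sum>k<n. \<bar>matpow n A (T * Suc m) i k - matpow n A (T * Suc m) j k\<bar>)
      = (\<Sum>k<n. \<bar>\<Sum>l<n. d l * matpow n A T l k\<bar>)"
    by (simp add: add.commute)
  also have "\<dots> \<le> D / 2 * (\<Sum>l<n. \<bar>d l\<bar>)"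
    by (rule dobrushin_contraction[OF _ QD])
       (simp add: d_def sum_subtractf matpow_row_sum[OF st ij(1)] matpow_row_sum[OF st ij(2)])
  also have "\<dots> \<le> D / 2 * (2 * (D / 2) ^ m)"
    using Suc.IH D0 unfolding d_def by (intro mult_left_mono) auto
  finally show ?case by simp
qed

definition mixing_times :: "nat \<Rightarrow> (nat \<Rightarrow> nat \<Rightarrow> real) \<Rightarrow> nat set" where
  "mixing_times n A =
    {t. \<forall>i<n. \<forall>j<n. (\<Sum>k<n. \<bar>matpow n A t i k - matpow n A t j k\<bar>) \<le> 1 / exp 1}"

lemma tau_mix_eq_Least: "tau_mix n A = (LEAST t. t \<in> mixing_times n A)"
  unfolding tau_mix_def mixing_times_def by (simp add: Inf_nat_def)

lemma primitive_mixing_times_nonempty: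
  assumes st: "stochastic n A" and pr: "primitive n A" and n: "1 \<le> n"
  shows "mixing_times n A \<noteq> {}"
proof -
  obtain T where T: "\<forall>i<n. \<forall>j<n. 0 < matpow n A T i j"
    using primitive_matpow_pos[OF st pr] by blast
  define dist where "dist ij = (\<Sum>k<n. \<bar>matpow n A T (fst ij) k - matpow n A T (snd ij) k\<bar>)" for ij
  define D where "D = Max (dist ` ({..<n} \<times> {..<n}))"
  have ne: "{..<n} \<times> {..<n} \<noteq> {}" using n by (auto simp: lessThan_empty_iff)
  have QD: "(\<Sum>k<n. \<bar>matpow n A T i k - matpow n A T j k\<bar>) \<le> D" if "i < n" "j < n" for i j
  proof -
    have "dist (i, j) \<le> D" unfolding D_def by (rule Max_ge) (use that in auto)
    then show ?thesis by (simp add: dist_def)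
  qed
  \<comment> \<open>the rows of the positive power A^T are pairwise closer than 2, so iterating A^T contracts\<close>
  have "D < 2"
    unfolding D_def using ne T n
    by (subst Max_less_iff) (auto simp: dist_def less_imp_le intro!: prob_vectors_dist_lt_2[of _ _ _ 0]
        matpow_row_sum[OF st])
  moreover have "0 \<le> D" using QD[of 0 0] n by simp
  ultimately obtain m where "(D / 2) ^ m < 1 / (2 * exp 1)"
    using LIMSEQ_power_zero[of "D / 2"] order_tendstoD(2)[of _ 0 sequentially "1 / (2 * exp 1)"]
    by (force simp: eventually_sequentially)
  then have "2 * (D / 2) ^ m < 1 / exp 1" by (simp add: field_simps)
  have "T * m \<in> mixing_times n A"
    unfolding mixing_times_def
  proof (intro CollectI allI impI)
    fix i j assume "i < n" "j < n"
    from matpow_mult_dist_le[OF st \<open>0 \<le> D\<close> QD this, of m] \<open>2 * (D / 2) ^ m < 1 / exp 1\<close>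
    show "(\<Sum>k<n. \<bar>matpow n A (T * m) i k - matpow n A (T * m) j k\<bar>) \<le> 1 / exp 1"
      by linarith
  qed
  then show ?thesis by blast
qed

lemma tau_mix_mem_mixing_times:
  assumes "stochastic n A" "primitive n A" "1 \<le> n"
  shows "tau_mix n A \<in> mixing_times n A"
  unfolding tau_mix_eq_Least using primitive_mixing_times_nonempty[OF assms] by (auto intro: LeastI)

lemma tau_mix_pos:
  assumes "stochastic n A" "primitive n A" and n: "2 \<le> n"
  shows "0 < tau_mix n A"
proof -
  \<comment> \<open>rows 0 and 1 of the identity are at distance 2 > 1/e\<close>
  have "1 \<le> (\<Sum>k<n. \<bar>matpow n A 0 0 k - matpow n A 0 1 k\<bar>)"
    using member_le_sum[of 0 "{..<n}" "\<lambda>k. \<bar>matpow n A 0 0 k - matpow n A 0 1 k\<bar>"] n by simp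
  moreover have "1 / exp 1 < (1::real)" by simp
  moreover have "0 < n" "1 < n" using n by auto
  ultimately have "0 \<notin> mixing_times n A"
    unfolding mixing_times_def mem_Collect_eq by (meson not_le order_less_le_trans)
  then show ?thesis
    using tau_mix_mem_mixing_times[OF assms(1,2)] n by (metis gr0I le_trans one_le_numeral)
qed

section \<open>Column averages of matrix powers\<close>

text \<open>col_ave n A k is the row vector (1/n) 1^T A^k; its j-th entry is the weight of x_j(0) in ave(x(k)).\<close>

definition col_ave :: "nat \<Rightarrow> (nat \<Rightarrow> nat \<Rightarrow> real) \<Rightarrow> nat \<Rightarrow> nat \<Rightarrow> real" where
  "col_ave n A k j = (\<Sum>i<n. matpow n A k i j) / real n"

lemma col_ave_nonneg: "stochastic n A \<Longrightarrow> j < n \<Longrightarrow> 0 \<le> col_ave n A k j"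
  unfolding col_ave_def by (intro divide_nonneg_nonneg sum_nonneg) (auto intro: matpow_nonneg)

lemma col_ave_sum:
  assumes st: "stochastic n A" and n: "1 \<le> n"
  shows "(\<Sum>j<n. col_ave n A k j) = 1"
proof -
  have "(\<Sum>j<n. col_ave n A k j) = (\<Sum>j<n. \<Sum>i<n. matpow n A k i j) / real n"
    unfolding col_ave_def by (simp add: sum_divide_distrib)
  also have "\<dots> = (\<Sum>i<n. \<Sum>j<n. matpow n A k i j) / real n"
    by (subst sum.swap) (rule refl)
  finally show ?thesis using n by (simp add: matpow_row_sum[OF st])
qed

lemma col_ave_add:
  assumes "j < n"
  shows "col_ave n A (a + b) j = (\<Sum>l<n. col_ave n A a l * matpow n A b l j)"
proof -
  have "col_ave n A (a + b) j = (\<Sum>l<n. \<Sum>i<n. matpow n A a i l * matpow n A b l j) / real n"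
    unfolding col_ave_def matpow_add[OF assms] by (subst sum.swap) simp
  then show ?thesis
    unfolding col_ave_def by (simp add: sum_divide_distrib sum_distrib_right)
qed

lemma ave_state_minus_eq:
  assumes st: "stochastic n A" and n: "1 \<le> n"
  shows "ave n (state n A \<mu> x k) - \<mu> = (\<Sum>j<n. col_ave n A k j * x j)"
proof -
  have "(\<Sum>i<n. state n A \<mu> x k i)
      = (\<Sum>i<n. (\<Sum>j<n. matpow n A k i j) * \<mu> + (\<Sum>j<n. matpow n A k i j * x j))"
    unfolding state_def by (simp add: distrib_left sum.distrib sum_distrib_right)
  also have "\<dots> = real n * \<mu> + (\<Sum>j<n. (\<Sum>i<n. matpow n A k i j) * x j)"
    by (simp add: matpow_row_sum[OF st] sum.distrib sum_distrib_right) (rule sum.swap)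
  moreover have "(\<Sum>j<n. col_ave n A k j * x j) = (\<Sum>j<n. (\<Sum>i<n. matpow n A k i j) * x j) / real n"
    unfolding col_ave_def sum_divide_distrib by (simp add: sum_divide_distrib[symmetric])
  ultimately show ?thesis
    unfolding ave_def using n by (simp add: field_simps)
qed

lemma col_ave_increment_bound:
  assumes st: "stochastic n A" and n: "1 \<le> n" and mix: "\<tau> \<in> mixing_times n A"
  shows "(\<Sum>j<n. \<bar>col_ave n A (a + Suc l * \<tau>) j - col_ave n A (a + l * \<tau>) j\<bar>) \<le> 2 * (1 / 4) ^ l"
proof (induction l)
  case 0
  show ?case
    using prob_vectors_dist_le_2[of n "col_ave n A (a + \<tau>)" "col_ave n A a"]
    by (simp add: col_ave_nonneg[OF st] col_ave_sum[OF st n])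
next
  case (Suc l)
  define d where "d j = col_ave n A (a + Suc l * \<tau>) j - col_ave n A (a + l * \<tau>) j" for j
  have "col_ave n A (a + Suc l * \<tau> + \<tau>) j - col_ave n A (a + l * \<tau> + \<tau>) j
      = (\<Sum>i<n. d i * matpow n A \<tau> i j)" if "j < n" for j
    unfolding d_def col_ave_add[OF that] by (simp add: left_diff_distrib sum_subtractf)
  moreover have "a + Suc (Suc l) * \<tau> = a + Suc l * \<tau> + \<tau>" "a + Suc l * \<tau> = a + l * \<tau> + \<tau>"
    by simp_all
  ultimately have "(\<Sum>j<n. \<bar>col_ave n A (a + Suc (Suc l) * \<tau>) j - col_ave n A (a + Suc l * \<tau>) j\<bar>)
      = (\<Sum>j<n. \<bar>\<Sum>i<n. d i * matpow n A \<tau> i j\<bar>)"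
    by (metis (no_types, lifting) lessThan_iff sum.cong)
  also have "\<dots> \<le> 1 / exp 1 / 2 * (\<Sum>i<n. \<bar>d i\<bar>)"
    using mix unfolding mixing_times_def
    by (intro dobrushin_contraction) (auto simp: d_def sum_subtractf col_ave_sum[OF st n])
  also have "\<dots> \<le> 1 / 4 * (2 * (1 / 4) ^ l)"
  proof (rule mult_mono)
    have "2 \<le> exp (1::real)" using exp_ge_add_one_self[of 1] by simp
    then show "1 / exp 1 / 2 \<le> (1 / 4 :: real)" by (simp add: field_simps)
  qed (use Suc.IH in \<open>auto simp: d_def\<close>)
  finally show ?case by simp
qed

lemma col_ave_telescope:
  "col_ave n A (r + m * \<tau>) j
    = col_ave n A r j + (\<Sum>l<m. col_ave n A (r + Suc l * \<tau>) j - col_ave n A (r + l * \<tau>) j)"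
  using sum_lessThan_telescope[of "\<lambda>l. col_ave n A (r + l * \<tau>) j" m] by simp

lemma sup_ave_state_deviation_le:
  assumes st: "stochastic n A" and n: "1 \<le> n" and \<tau>: "0 < \<tau>" and "0 \<le> \<epsilon>"
    and first: "\<And>r. r < \<tau> \<Longrightarrow> \<bar>\<Sum>j<n. col_ave n A r j * x j\<bar> \<le> \<epsilon> / 2"
    and incr: "\<And>r l. r < \<tau> \<Longrightarrow>
      \<bar>\<Sum>j<n. (col_ave n A (r + Suc l * \<tau>) j - col_ave n A (r + l * \<tau>) j) * x j\<bar> \<le> \<epsilon> / 8 * (3 / 4) ^ l"
  shows "(SUP k. \<bar>ave n (state n A \<mu> x k) - \<mu>\<bar>) \<le> \<epsilon>"
proof (rule cSUP_least)
  fix k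
  define r m where "r = k mod \<tau>" and "m = k div \<tau>"
  have r: "r < \<tau>" and k: "k = r + m * \<tau>" using \<tau> by (simp_all add: r_def m_def)
  define Y where "Y l = (\<Sum>j<n. (col_ave n A (r + Suc l * \<tau>) j - col_ave n A (r + l * \<tau>) j) * x j)" for l
  have "ave n (state n A \<mu> x k) - \<mu>
      = (\<Sum>j<n. col_ave n A r j * x j) + (\<Sum>j<n. \<Sum>l<m.
          (col_ave n A (r + Suc l * \<tau>) j - col_ave n A (r + l * \<tau>) j) * x j)"
    unfolding ave_state_minus_eq[OF st n] k
    by (simp only: col_ave_telescope[of n A r m \<tau>] distrib_right sum.distrib sum_distrib_right)
  also have "(\<Sum>j<n. \<Sum>l<m. (col_ave n A (r + Suc l * \<tau>) j - col_ave n A (r + l * \<tau>) j) * x j)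
      = (\<Sum>l<m. Y l)"
    unfolding Y_def by (rule sum.swap)
  finally have "ave n (state n A \<mu> x k) - \<mu> = (\<Sum>j<n. col_ave n A r j * x j) + (\<Sum>l<m. Y l)" .
  moreover have "\<bar>\<Sum>l<m. Y l\<bar> \<le> \<epsilon> / 2"
  proof -
    have "\<bar>\<Sum>l<m. Y l\<bar> \<le> \<epsilon> / 8 * (\<Sum>l<m. (3 / 4) ^ l)"
      unfolding sum_distrib_left Y_def by (rule order_trans[OF sum_abs sum_mono]) (use incr r in auto)
    also have "\<dots> \<le> \<epsilon> / 8 * 4"
      using geometric_sum_less[of "3 / 4 :: real" "{..<m}"] \<open>0 \<le> \<epsilon>\<close> by (intro mult_left_mono) auto
    finally show ?thesis by simp
  qed
  ultimately show "\<bar>ave n (state n A \<mu> x k) - \<mu>\<bar> \<le> \<epsilon>" using first[OF r] by linarith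
qed simp

lemma norm1_matpow_div_le_1:
  assumes st: "stochastic n A" and n: "0 < n"
  shows "norm1 n (\<lambda>i j. matpow n A k i j / real n) \<le> 1"
proof -
  have "(\<Sum>i<n. \<bar>matpow n A k i j / real n\<bar>) \<le> 1" if j: "j < n" for j
  proof -
    have "(\<Sum>i<n. \<bar>matpow n A k i j / real n\<bar>) = col_ave n A k j"
      unfolding col_ave_def using matpow_nonneg[OF st _ j] by (simp add: sum_divide_distrib)
    also have "\<dots> \<le> (\<Sum>j<n. col_ave n A k j)"
      by (rule member_le_sum[where f = "col_ave n A k"]) (use j col_ave_nonneg[OF st] in auto)
    finally show ?thesis using col_ave_sum[OF st] j by simp
  qed
  then show ?thesis unfolding norm1_def using n by (subst Max_le_iff) auto
qed

lemma col_ave_le_SUP_norm1: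
  assumes st: "stochastic n A" and j: "j < n"
  shows "col_ave n A k j \<le> (SUP k. norm1 n (\<lambda>i j. matpow n A k i j / real n))"
proof -
  have "col_ave n A k j = (\<Sum>i<n. \<bar>matpow n A k i j / real n\<bar>)"
    unfolding col_ave_def using matpow_nonneg[OF st _ j] by (simp add: sum_divide_distrib)
  also have "\<dots> \<le> norm1 n (\<lambda>i j. matpow n A k i j / real n)"
    unfolding norm1_def by (simp add: j)
  also have "\<dots> \<le> (SUP k. norm1 n (\<lambda>i j. matpow n A k i j / real n))"
    using norm1_matpow_div_le_1[OF st] j by (intro cSUP_upper bdd_aboveI2) auto
  finally show ?thesis .
qed

lemma sum_squares_le_bound_times_sum_abs:
  fixes a :: "'a \<Rightarrow> real"
  assumes "\<And>j. j \<in> J \<Longrightarrow> \<bar>a j\<bar> \<le> s"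
  shows "(\<Sum>j\<in>J. (a j)\<^sup>2) \<le> s * (\<Sum>j\<in>J. \<bar>a j\<bar>)"
  unfolding sum_distrib_left
proof (intro sum_mono)
  fix j assume "j \<in> J"
  have "(a j)\<^sup>2 = \<bar>a j\<bar> * \<bar>a j\<bar>" by (simp add: power2_eq_square)
  also have "\<dots> \<le> s * \<bar>a j\<bar>" by (rule mult_right_mono[OF assms[OF \<open>j \<in> J\<close>]]) simp
  finally show "(a j)\<^sup>2 \<le> s * \<bar>a j\<bar>" .
qed

lemma col_ave_sum_squares_le:
  assumes st: "stochastic n A" and n: "1 \<le> n" and s: "\<And>j. j < n \<Longrightarrow> col_ave n A k j \<le> s"
  shows "(\<Sum>j<n. (col_ave n A k j)\<^sup>2) \<le> s"
  using sum_squares_le_bound_times_sum_abs[of "{..<n}" "col_ave n A k" s] s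
  by (simp add: col_ave_nonneg[OF st] col_ave_sum[OF st n])

lemma col_ave_increment_sum_squares_le:
  assumes st: "stochastic n A" and n: "1 \<le> n" and mix: "\<tau> \<in> mixing_times n A"
    and s: "\<And>k j. j < n \<Longrightarrow> col_ave n A k j \<le> s"
  shows "(\<Sum>j<n. (col_ave n A (a + Suc l * \<tau>) j - col_ave n A (a + l * \<tau>) j)\<^sup>2)
      \<le> s * (2 * (1 / 4) ^ l)"
proof -
  have "\<bar>col_ave n A (a + Suc l * \<tau>) j - col_ave n A (a + l * \<tau>) j\<bar> \<le> s" if "j < n" for j
    using s[OF that] col_ave_nonneg[OF st that] unfolding abs_le_iff by (smt (verit))
  then have "(\<Sum>j<n. (col_ave n A (a + Suc l * \<tau>) j - col_ave n A (a + l * \<tau>) j)\<^sup>2)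
      \<le> s * (\<Sum>j<n. \<bar>col_ave n A (a + Suc l * \<tau>) j - col_ave n A (a + l * \<tau>) j\<bar>)"
    by (intro sum_squares_le_bound_times_sum_abs) auto
  also have "\<dots> \<le> s * (2 * (1 / 4) ^ l)"
    using s[of 0 0] col_ave_nonneg[OF st, of 0 0] n
    by (intro mult_left_mono col_ave_increment_bound[OF st n mix]) auto
  finally show ?thesis .
qed

section \<open>Linear combinations of independent centered noise\<close>

context prob_space
begin

lemma centered_normal_moments:
  assumes X: "distributed M lborel X (normal_density 0 \<sigma>)" and \<sigma>: "0 < \<sigma>"
  shows "integrable M (\<lambda>\<omega>. X \<omega> ^ 2)" "expectation X = 0" "expectation (\<lambda>\<omega>. X \<omega> ^ 2) = \<sigma>\<^sup>2"
proof -
  have "integrable lborel (\<lambda>x. normal_density 0 \<sigma> x * x ^ 2)"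
    using integrable_normal_moment[OF \<sigma>, of 0 2] by simp
  then show "integrable M (\<lambda>\<omega>. X \<omega> ^ 2)"
    using distributed_integrable[OF X, of "\<lambda>x. x ^ 2"] by simp
  show "expectation X = 0" by (rule normal_distributed_expectation[OF \<sigma> X])
  then show "expectation (\<lambda>\<omega>. X \<omega> ^ 2) = \<sigma>\<^sup>2"
    using normal_distributed_variance[OF \<sigma> X] by simp
qed

lemma second_moment_lin_comb:
  fixes \<xi> :: "'i \<Rightarrow> 'a \<Rightarrow> real" and a :: "'i \<Rightarrow> real"
  assumes "finite I" and indep: "indep_vars (\<lambda>_. borel) \<xi> I"
    and sq: "\<And>i. i \<in> I \<Longrightarrow> integrable M (\<lambda>\<omega>. \<xi> i \<omega> ^ 2)"
    and mean: "\<And>i. i \<in> I \<Longrightarrow> expectation (\<xi> i) = 0"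
    and var: "\<And>i. i \<in> I \<Longrightarrow> expectation (\<lambda>\<omega>. \<xi> i \<omega> ^ 2) = v"
  shows "integrable M (\<lambda>\<omega>. (\<Sum>j\<in>I. a j * \<xi> j \<omega>)\<^sup>2)"
    and "expectation (\<lambda>\<omega>. (\<Sum>j\<in>I. a j * \<xi> j \<omega>)\<^sup>2) = v * (\<Sum>j\<in>I. (a j)\<^sup>2)"
proof -
  have int: "integrable M (\<xi> i)" if "i \<in> I" for i
  proof (rule square_integrable_imp_integrable[OF _ sq[OF that]])
    show "\<xi> i \<in> borel_measurable M" using indep that unfolding indep_vars_def2 by blast
  qed
  have prod: "integrable M (\<lambda>\<omega>. \<xi> i \<omega> * \<xi> j \<omega>) \<and>
      expectation (\<lambda>\<omega>. \<xi> i \<omega> * \<xi> j \<omega>) = (if i = j then v else 0)"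
    if ij: "i \<in> I" "j \<in> I" for i j
  proof (cases "i = j")
    case True
    then show ?thesis using sq[OF ij(1)] var[OF ij(1)] by (simp add: power2_eq_square)
  next
    case False
    have "indep_vars (\<lambda>_. borel) \<xi> (insert i {j})"
      by (rule indep_vars_subset[OF indep]) (use ij in auto)
    from indep_vars_sum[OF _ _ this] False
    have iv: "indep_var borel (\<xi> i) borel (\<xi> j)" by simp
    show ?thesis
      using indep_var_integrable[OF iv int[OF ij(1)] int[OF ij(2)]]
        indep_var_lebesgue_integral[OF iv int[OF ij(1)] int[OF ij(2)]] mean[OF ij(1)] False
      by simp
  qed
  have sq_eq: "(\<Sum>j\<in>I. a j * \<xi> j \<omega>)\<^sup>2 = (\<Sum>i\<in>I. \<Sum>j\<in>I. a i * a j * (\<xi> i \<omega> * \<xi> j \<omega>))" for \<omega>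
    by (simp add: power2_eq_square sum_product mult_ac)
  have int_ij: "integrable M (\<lambda>\<omega>. a i * a j * (\<xi> i \<omega> * \<xi> j \<omega>))" if "i \<in> I" "j \<in> I" for i j
    using prod[OF that] by (intro integrable_mult_right) blast
  show "integrable M (\<lambda>\<omega>. (\<Sum>j\<in>I. a j * \<xi> j \<omega>)\<^sup>2)"
    unfolding sq_eq by (intro Bochner_Integration.integrable_sum int_ij)
  have "expectation (\<lambda>\<omega>. (\<Sum>j\<in>I. a j * \<xi> j \<omega>)\<^sup>2)
      = (\<Sum>i\<in>I. \<Sum>j\<in>I. a i * a j * expectation (\<lambda>\<omega>. \<xi> i \<omega> * \<xi> j \<omega>))"
  proof -
    have "expectation (\<lambda>\<omega>. \<Sum>i\<in>I. \<Sum>j\<in>I. a i * a j * (\<xi> i \<omega> * \<xi> j \<omega>))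
        = (\<Sum>i\<in>I. expectation (\<lambda>\<omega>. \<Sum>j\<in>I. a i * a j * (\<xi> i \<omega> * \<xi> j \<omega>)))"
      by (intro Bochner_Integration.integral_sum Bochner_Integration.integrable_sum int_ij)
    also have "\<dots> = (\<Sum>i\<in>I. \<Sum>j\<in>I. expectation (\<lambda>\<omega>. a i * a j * (\<xi> i \<omega> * \<xi> j \<omega>)))"
      by (intro sum.cong refl Bochner_Integration.integral_sum int_ij)
    finally show ?thesis unfolding sq_eq by simp
  qed
  also have "\<dots> = (\<Sum>i\<in>I. \<Sum>j\<in>I. a i * a j * (if i = j then v else 0))"
    using prod by simp
  also have "\<dots> = v * (\<Sum>j\<in>I. (a j)\<^sup>2)"
    by (simp add: sum_distrib_left power2_eq_square mult_ac if_distrib[of "\<lambda>x. _ * x"] sum.delta' \<open>finite I\<close> cong: if_cong)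
  finally show "expectation (\<lambda>\<omega>. (\<Sum>j\<in>I. a j * \<xi> j \<omega>)\<^sup>2) = v * (\<Sum>j\<in>I. (a j)\<^sup>2)" .
qed

lemma prob_abs_lin_comb_gt_le:
  fixes \<xi> :: "'i \<Rightarrow> 'a \<Rightarrow> real" and a :: "'i \<Rightarrow> real"
  assumes "finite I" and indep: "indep_vars (\<lambda>_. borel) \<xi> I"
    and sq: "\<And>i. i \<in> I \<Longrightarrow> integrable M (\<lambda>\<omega>. \<xi> i \<omega> ^ 2)"
    and mean: "\<And>i. i \<in> I \<Longrightarrow> expectation (\<xi> i) = 0"
    and var: "\<And>i. i \<in> I \<Longrightarrow> expectation (\<lambda>\<omega>. \<xi> i \<omega> ^ 2) = v"
    and t: "0 < t"
  shows "{\<omega>\<in>space M. t < \<bar>\<Sum>j\<in>I. a j * \<xi> j \<omega>\<bar>} \<in> events"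
    and "prob {\<omega>\<in>space M. t < \<bar>\<Sum>j\<in>I. a j * \<xi> j \<omega>\<bar>} \<le> v * (\<Sum>j\<in>I. (a j)\<^sup>2) / t\<^sup>2"
proof -
  define Y where "Y \<omega> = (\<Sum>j\<in>I. a j * \<xi> j \<omega>)" for \<omega>
  have [measurable]: "Y \<in> borel_measurable M"
    using indep unfolding Y_def indep_vars_def2 by (intro borel_measurable_sum borel_measurable_times) auto
  show "{\<omega>\<in>space M. t < \<bar>\<Sum>j\<in>I. a j * \<xi> j \<omega>\<bar>} \<in> events"
    unfolding Y_def[symmetric] by measurable
  have "prob {\<omega>\<in>space M. t < \<bar>Y \<omega>\<bar>} \<le> prob {\<omega>\<in>space M. t\<^sup>2 \<le> (Y \<omega>)\<^sup>2}"
    using t by (intro finite_measure_mono) (auto simp: abs_le_square_iff[symmetric] intro: less_imp_le)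
  also have "\<dots> \<le> expectation (\<lambda>\<omega>. (Y \<omega>)\<^sup>2) / t\<^sup>2"
    by (rule integral_Markov_inequality_measure[where A = "space M"])
       (use second_moment_lin_comb(1)[OF assms(1-5), of a] t in \<open>auto simp: Y_def\<close>)
  also have "\<dots> = v * (\<Sum>j\<in>I. (a j)\<^sup>2) / t\<^sup>2"
    unfolding Y_def using second_moment_lin_comb(2)[OF assms(1-5), of a] by simp
  finally show "prob {\<omega>\<in>space M. t < \<bar>\<Sum>j\<in>I. a j * \<xi> j \<omega>\<bar>} \<le> v * (\<Sum>j\<in>I. (a j)\<^sup>2) / t\<^sup>2"
    unfolding Y_def .
qed

lemma prob_Union_le_geometric:
  assumes F: "\<And>l. F l \<in> events" and bound: "\<And>l. prob (F l) \<le> c * q ^ l"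
    and q: "0 \<le> q" "q < 1"
  shows "prob (\<Union>l. F l) \<le> c / (1 - q)"
proof -
  have geom: "summable (\<lambda>l. c * q ^ l)" "(\<Sum>l. c * q ^ l) = c / (1 - q)"
    using q by (auto intro!: summable_mult summable_geometric simp: suminf_mult suminf_geometric)
  have summable: "summable (\<lambda>l. prob (F l))"
    by (rule summable_comparison_test'[OF geom(1), of 0]) (use bound in auto)
  then have "prob (\<Union>l. F l) \<le> (\<Sum>l. prob (F l))"
    using F by (intro finite_measure_subadditive_countably) auto
  also have "\<dots> \<le> (\<Sum>l. c * q ^ l)"
    by (rule suminf_le[OF bound summable geom(1)])
  finally show ?thesis using geom(2) by simp
qed

section \<open>Probability of a large deviation of the average\<close>

lemma prob_col_ave_comb_gt_le:
  fixes \<xi> :: "nat \<Rightarrow> 'a \<Rightarrow> real"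
  assumes st: "stochastic n A" and n: "1 \<le> n"
    and indep: "indep_vars (\<lambda>_. borel) \<xi> {..<n}"
    and sq: "\<And>i. i < n \<Longrightarrow> integrable M (\<lambda>\<omega>. \<xi> i \<omega> ^ 2)"
    and mean: "\<And>i. i < n \<Longrightarrow> expectation (\<xi> i) = 0"
    and var: "\<And>i. i < n \<Longrightarrow> expectation (\<lambda>\<omega>. \<xi> i \<omega> ^ 2) = v"
    and "0 \<le> v" and s: "\<And>j. j < n \<Longrightarrow> col_ave n A k j \<le> s" and t: "0 < t"
  shows "prob {\<omega>\<in>space M. t < \<bar>\<Sum>j<n. col_ave n A k j * \<xi> j \<omega>\<bar>} \<le> v * s / t\<^sup>2"
proof -
  have "prob {\<omega>\<in>space M. t < \<bar>\<Sum>j<n. col_ave n A k j * \<xi> j \<omega>\<bar>}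
      \<le> v * (\<Sum>j<n. (col_ave n A k j)\<^sup>2) / t\<^sup>2"
    using prob_abs_lin_comb_gt_le(2)[OF finite_lessThan indep _ _ _ t] sq mean var by simp
  also have "\<dots> \<le> v * s / t\<^sup>2"
    using \<open>0 \<le> v\<close> col_ave_sum_squares_le[OF st n s] by (intro divide_right_mono mult_left_mono) auto
  finally show ?thesis .
qed

lemma prob_col_ave_increment_comb_gt_le:
  fixes \<xi> :: "nat \<Rightarrow> 'a \<Rightarrow> real"
  assumes st: "stochastic n A" and n: "1 \<le> n" and mix: "\<tau> \<in> mixing_times n A"
    and indep: "indep_vars (\<lambda>_. borel) \<xi> {..<n}"
    and sq: "\<And>i. i < n \<Longrightarrow> integrable M (\<lambda>\<omega>. \<xi> i \<omega> ^ 2)"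
    and mean: "\<And>i. i < n \<Longrightarrow> expectation (\<xi> i) = 0"
    and var: "\<And>i. i < n \<Longrightarrow> expectation (\<lambda>\<omega>. \<xi> i \<omega> ^ 2) = v"
    and "0 \<le> v" and s: "\<And>k j. j < n \<Longrightarrow> col_ave n A k j \<le> s" and t: "0 < t"
  shows "prob {\<omega>\<in>space M.
      t < \<bar>\<Sum>j<n. (col_ave n A (a + Suc l * \<tau>) j - col_ave n A (a + l * \<tau>) j) * \<xi> j \<omega>\<bar>}
    \<le> v * (s * (2 * (1 / 4) ^ l)) / t\<^sup>2"
proof -
  have "prob {\<omega>\<in>space M.
      t < \<bar>\<Sum>j<n. (col_ave n A (a + Suc l * \<tau>) j - col_ave n A (a + l * \<tau>) j) * \<xi> j \<omega>\<bar>}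
    \<le> v * (\<Sum>j<n. (col_ave n A (a + Suc l * \<tau>) j - col_ave n A (a + l * \<tau>) j)\<^sup>2) / t\<^sup>2"
    using prob_abs_lin_comb_gt_le(2)[OF finite_lessThan indep _ _ _ t] sq mean var by simp
  also have "\<dots> \<le> v * (s * (2 * (1 / 4) ^ l)) / t\<^sup>2"
    using \<open>0 \<le> v\<close> col_ave_increment_sum_squares_le[OF st n mix s]
    by (intro divide_right_mono mult_left_mono) auto
  finally show ?thesis .
qed

lemma prob_sup_ave_deviation_gt_le:
  fixes \<xi> :: "nat \<Rightarrow> 'a \<Rightarrow> real"
  assumes st: "stochastic n A" and pr: "primitive n A" and n: "2 \<le> n"
    and indep: "indep_vars (\<lambda>_. borel) \<xi> {..<n}"
    and sq: "\<And>i. i < n \<Longrightarrow> integrable M (\<lambda>\<omega>. \<xi> i \<omega> ^ 2)"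
    and mean: "\<And>i. i < n \<Longrightarrow> expectation (\<xi> i) = 0"
    and var: "\<And>i. i < n \<Longrightarrow> expectation (\<lambda>\<omega>. \<xi> i \<omega> ^ 2) = v"
    and \<epsilon>: "0 < \<epsilon>" and s: "\<And>k j. j < n \<Longrightarrow> col_ave n A k j \<le> s"
  shows "prob {\<omega>\<in>space M. \<epsilon> < (SUP k. \<bar>ave n (state n A \<mu> (\<lambda>j. \<xi> j \<omega>) k) - \<mu>\<bar>)}
      \<le> 235 * v / \<epsilon>\<^sup>2 * (real (tau_mix n A) * s)"
proof -
  define \<tau> where "\<tau> = tau_mix n A"
  have n1: "1 \<le> n" using n by simp
  have \<tau>: "0 < \<tau>" "\<tau> \<in> mixing_times n A"
    using tau_mix_pos[OF st pr n] tau_mix_mem_mixing_times[OF st pr n1] by (simp_all add: \<tau>_def)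
  have "0 \<le> v" using var[of 0] n integral_nonneg_AE[of "\<lambda>\<omega>. \<xi> 0 \<omega> ^ 2" M] by simp
  have "0 \<le> s" using s[of 0 0] col_ave_nonneg[OF st, of 0 0] n by simp
  define K where "K = v * s / \<epsilon>\<^sup>2"
  have "0 \<le> K" unfolding K_def using \<open>0 \<le> v\<close> \<open>0 \<le> s\<close> by simp
  define E where "E r = {\<omega>\<in>space M. \<epsilon> / 2 < \<bar>\<Sum>j<n. col_ave n A r j * \<xi> j \<omega>\<bar>}" for r
  define F where "F r l = {\<omega>\<in>space M. \<epsilon> / 8 * (3 / 4) ^ l <
    \<bar>\<Sum>j<n. (col_ave n A (r + Suc l * \<tau>) j - col_ave n A (r + l * \<tau>) j) * \<xi> j \<omega>\<bar>}" for r l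
  have threshold_pos: "0 < \<epsilon> / 8 * (3 / 4) ^ l" for l :: nat
    using \<epsilon> by simp
  have tail_events: "{\<omega>\<in>space M. t < \<bar>\<Sum>j<n. a j * \<xi> j \<omega>\<bar>} \<in> events" if "0 < t" for a t
    using prob_abs_lin_comb_gt_le(1)[OF finite_lessThan indep _ _ _ that] sq mean var by simp
  have events: "E r \<in> events" "F r l \<in> events" for r l
    unfolding E_def F_def using \<epsilon> threshold_pos by (intro tail_events; simp)+
  have PE: "prob (E r) \<le> 4 * K" for r
    using prob_col_ave_comb_gt_le[OF st n1 indep sq mean var \<open>0 \<le> v\<close> s, where k = r and t = "\<epsilon> / 2"] \<epsilon>
    unfolding E_def K_def by (simp add: power_divide mult_ac)
  have PF: "prob (F r l) \<le> 128 * K * (4 / 9) ^ l" for r l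
  proof -
    have "prob (F r l) \<le> v * (s * (2 * (1 / 4) ^ l)) / (\<epsilon> / 8 * (3 / 4) ^ l)\<^sup>2"
      unfolding F_def by (rule prob_col_ave_increment_comb_gt_le[OF st n1 \<tau>(2) indep sq mean var
          \<open>0 \<le> v\<close> s threshold_pos])
    also have "(1 / 4 :: real) ^ l = (4 / 9) ^ l * (9 / 16) ^ l"
      by (simp flip: power_mult_distrib)
    also have "(\<epsilon> / 8 * (3 / 4) ^ l)\<^sup>2 = \<epsilon>\<^sup>2 / 64 * (9 / 16 :: real) ^ l"
      by (simp add: power_mult_distrib power_divide power2_eq_square flip: power_mult_distrib)
    also have "v * (s * (2 * ((4 / 9) ^ l * (9 / 16) ^ l))) / (\<epsilon>\<^sup>2 / 64 * (9 / 16) ^ l)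
        = 128 * K * (4 / 9 :: real) ^ l"
      using \<epsilon> unfolding K_def by (simp add: field_simps)
    finally show ?thesis .
  qed
  have "{\<omega>\<in>space M. \<epsilon> < (SUP k. \<bar>ave n (state n A \<mu> (\<lambda>j. \<xi> j \<omega>) k) - \<mu>\<bar>)}
      \<subseteq> (\<Union>r<\<tau>. E r \<union> (\<Union>l. F r l))"
  proof (rule subsetI, rule ccontr)
    fix \<omega> assume \<omega>: "\<omega> \<in> {\<omega>\<in>space M. \<epsilon> < (SUP k. \<bar>ave n (state n A \<mu> (\<lambda>j. \<xi> j \<omega>) k) - \<mu>\<bar>)}"
      and "\<omega> \<notin> (\<Union>r<\<tau>. E r \<union> (\<Union>l. F r l))"
    then have "(SUP k. \<bar>ave n (state n A \<mu> (\<lambda>j. \<xi> j \<omega>) k) - \<mu>\<bar>) \<le> \<epsilon>"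
      by (intro sup_ave_state_deviation_le[OF st n1 \<tau>(1) less_imp_le[OF \<epsilon>]])
         (auto simp: E_def F_def not_less)
    with \<omega> show False by simp
  qed
  then have "prob {\<omega>\<in>space M. \<epsilon> < (SUP k. \<bar>ave n (state n A \<mu> (\<lambda>j. \<xi> j \<omega>) k) - \<mu>\<bar>)}
      \<le> prob (\<Union>r<\<tau>. E r \<union> (\<Union>l. F r l))"
    using events by (intro finite_measure_mono) auto
  also have "\<dots> \<le> (\<Sum>r<\<tau>. prob (E r \<union> (\<Union>l. F r l)))"
    using events by (intro finite_measure_subadditive_finite) auto
  also have "\<dots> \<le> (\<Sum>r<\<tau>. 4 * K + 128 * K / (1 - 4 / 9))"
  proof (rule sum_mono)
    fix r
    have "prob (\<Union>l. F r l) \<le> 128 * K / (1 - 4 / 9)"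
      by (intro prob_Union_le_geometric events PF) auto
    then show "prob (E r \<union> (\<Union>l. F r l)) \<le> 4 * K + 128 * K / (1 - 4 / 9)"
      using measure_Un_le[of "E r" M "\<Union>l. F r l"] PE[of r] events by (simp add: sets.countable_UN)
  qed
  also have "\<dots> = real \<tau> * (1172 / 5 * K)" by simp
  also have "\<dots> \<le> real \<tau> * (235 * K)" using \<open>0 \<le> K\<close> by (intro mult_left_mono) auto
  also have "\<dots> = 235 * v / \<epsilon>\<^sup>2 * (real (tau_mix n A) * s)" by (simp add: \<tau>_def K_def)
  finally show ?thesis .
qed

end

theorem theorem2:
  fixes M :: "'a measure"
    and P :: "nat \<Rightarrow> nat \<Rightarrow> nat \<Rightarrow> real"
    and \<xi> :: "nat \<Rightarrow> nat \<Rightarrow> 'a \<Rightarrow> real"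
    and \<mu> \<sigma> :: real
  assumes "prob_space M"
    and stoch: "\<And>n. n \<ge> 1 \<Longrightarrow> stochastic n (P n)"
    and prim: "\<And>n. n \<ge> 1 \<Longrightarrow> primitive n (P n)"
    and sigma_pos: "0 < \<sigma>"
    and indep: "\<And>n. prob_space.indep_vars M (\<lambda>_. borel) (\<xi> n) {..<n}"
    and gauss: "\<And>n i. i < n \<Longrightarrow> distributed M lborel (\<xi> n i) (normal_density 0 \<sigma>)"
    and lim: "(\<lambda>n. (SUP k. norm1 n (\<lambda>i j. matpow n (P n) k i j / real n))
                  * real (tau_mix n (P n))) \<longlonglongrightarrow> 0"
  shows "\<forall>\<epsilon>>0. (\<lambda>n. measure M {\<omega> \<in> space M.
            (SUP k. \<bar>ave n (state n (P n) \<mu> (\<lambda>j. \<xi> n j \<omega>) k) - \<mu>\<bar>) > \<epsilon>}) \<longlonglongrightarrow> 0"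
proof (intro allI impI)
  fix \<epsilon> :: real assume \<epsilon>: "0 < \<epsilon>"
  interpret prob_space M by fact
  define s where "s n = (SUP k. norm1 n (\<lambda>i j. matpow n (P n) k i j / real n))" for n
  have bound: "measure M {\<omega> \<in> space M. (SUP k. \<bar>ave n (state n (P n) \<mu> (\<lambda>j. \<xi> n j \<omega>) k) - \<mu>\<bar>) > \<epsilon>}
      \<le> 235 * \<sigma>\<^sup>2 / \<epsilon>\<^sup>2 * (s n * real (tau_mix n (P n)))" if n: "2 \<le> n" for n
  proof -
    have st: "stochastic n (P n)" and pr: "primitive n (P n)" using n stoch prim by simp_all
    have col: "col_ave n (P n) k j \<le> s n" if "j < n" for k j
      unfolding s_def by (rule col_ave_le_SUP_norm1[OF st that])
    note moments = centered_normal_moments[OF gauss sigma_pos]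
    show ?thesis
      unfolding mult.commute[of "s n" "real (tau_mix n (P n))"]
      by (rule prob_sup_ave_deviation_gt_le[OF st pr n indep moments \<epsilon> col])
  qed
  have majorant_lim: "(\<lambda>n. 235 * \<sigma>\<^sup>2 / \<epsilon>\<^sup>2 * (s n * real (tau_mix n (P n)))) \<longlonglongrightarrow> 0"
    unfolding s_def by (rule tendsto_mult_right_zero[OF lim])
  show "(\<lambda>n. measure M {\<omega> \<in> space M.
      (SUP k. \<bar>ave n (state n (P n) \<mu> (\<lambda>j. \<xi> n j \<omega>) k) - \<mu>\<bar>) > \<epsilon>}) \<longlonglongrightarrow> 0"
    by (rule tendsto_sandwich[OF always_eventually eventually_sequentiallyI tendsto_const majorant_lim])
       (use bound in auto)
qed

end
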